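(* Let $p\in[1,\infty]$, $a,b\in\mathbb{R}$, $b\neq0$, and $|a|\neq|b|^{1/p}$ (with $|b|^{1/p}=1$ when $p=\infty$). For any $g\in L^p(\mathbb{R})$ there is a unique (up to equality almost everywhere) solution $f\in L^p(\mathbb{R})$ of $$f(x)-af(bx)=g(x),$$ and it is given by the following series, which are absolutely and uniformly convergent in $L^p(\mathbb{R})$: $$f(x)=\begin{cases}\sum_{n=0}^\infty a^n g(b^nx) & \text{if } |a|<|b|^{1/p},\\ -\sum_{n=1}^\infty \left(\frac1a\right)^n g\!\left(\frac{x}{b^n}\right) & \text{if } |a|>|b|^{1/p}.\end{cases}$$
   Context: $L^p(\mathbb{R})$ denotes the usual Lebesgue space of real-valued functions on $\mathbb{R}$; for $p=\infty$ the convention $|b|^{1/p}=1$ is used. *)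

theory Defs
  imports "HOL-Analysis.Analysis" "HOL-Probability.Essential_Supremum"
begin

definition memLp :: "ennreal \<Rightarrow> (real \<Rightarrow> real) \<Rightarrow> bool" where
  "memLp p f \<longleftrightarrow> f \<in> borel_measurable lborel \<and>
     (if p = top then esssup lborel (\<lambda>x. ereal \<bar>f x\<bar>) < \<infinity>
      else integrable lborel (\<lambda>x. \<bar>f x\<bar> powr enn2real p))"

definition Lpnorm :: "ennreal \<Rightarrow> (real \<Rightarrow> real) \<Rightarrow> real" where
  "Lpnorm p f =
     (if p = top then real_of_ereal (esssup lborel (\<lambda>x. ereal \<bar>f x\<bar>))
      else (\<integral>x. \<bar>f x\<bar> powr enn2real p \<partial>lborel) powr (1 / enn2real p))"

definition root_p :: "ennreal \<Rightarrow> real \<Rightarrow> real" where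
  "root_p p b = (if p = top then 1 else \<bar>b\<bar> powr (1 / enn2real p))"

definition Lp_series_conv :: "ennreal \<Rightarrow> (nat \<Rightarrow> real \<Rightarrow> real) \<Rightarrow> (real \<Rightarrow> real) \<Rightarrow> bool" where
  "Lp_series_conv p s f \<longleftrightarrow>
     (\<forall>n. memLp p (s n)) \<and>
     summable (\<lambda>n. Lpnorm p (s n)) \<and>
     (\<lambda>N. Lpnorm p (\<lambda>x. f x - (\<Sum>n<N. s n x))) \<longlonglongrightarrow> 0"

end

theory Submission
  imports Defs
begin

text \<open>
  Write (T f)(x) = a f(b x). The substitution y = b x shows that T multiplies the L^p norm
  by c = |a| / |b|^(1/p) (by |a| for p = \<infinity>). If c < 1, the Neumann series \<Sum> T^n g
  converges in L^p and solves f - T f = g. If c > 1, dividing the equation by a and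
  substituting x / b gives an equation of the same kind for the inverse dilation, with factor
  1/c < 1, and its Neumann series is the second series. A difference d of two solutions
  satisfies d = T d, so ||d|| = c ||d|| forces d = 0 almost everywhere.

  Instead of Minkowski's inequality for infinite sums, the estimate that the tail
  \<Sum>(n \<ge> N) T^n g has norm at most c^N ||g|| / (1 - c) comes from the pointwise
  power-mean inequality (\<Sum> r^m v_m)^q \<le> (1 - r)^(1 - q) \<Sum> r^m v_m^q.
\<close>

lemma AE_lborel_scale:
  fixes c :: real
  assumes "c \<noteq> 0" and "AE x in lborel. P x"
  shows "AE x in lborel. P (c * x)"
proof -
  from assms(2) obtain N where N: "N \<in> null_sets lborel" "{x \<in> space lborel. \<not> P x} \<subseteq> N"
    by (auto simp: eventually_ae_filter)
  have [measurable]: "N \<in> sets borel"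
    using N(1) by (simp add: null_sets_def)
  have "AE x in lborel. x \<notin> N"
    using N(1) by (rule AE_not_in)
  then have "AE x in lborel. 0 + c * x \<notin> N"
    using assms(1) by (intro AE_borel_affine) auto
  then show ?thesis
    by eventually_elim (use N(2) in auto)
qed

lemma lborel_integral_scale:
  fixes f :: "real \<Rightarrow> real" and c :: real
  assumes "c \<noteq> 0"
  shows "(\<integral>x. f (c * x) \<partial>lborel) = (\<integral>x. f x \<partial>lborel) / \<bar>c\<bar>"
  using lborel_integral_real_affine[OF assms, of f 0] assms by simp

lemma lborel_integrable_scale:
  fixes f :: "real \<Rightarrow> real" and c :: real
  assumes "c \<noteq> 0" and "integrable lborel f"
  shows "integrable lborel (\<lambda>x. f (c * x))"
  using lborel_integrable_real_affine[OF assms(2), of c 0] assms(1) by simp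

lemma memLp_borel_measurable: "memLp p f \<Longrightarrow> f \<in> borel_measurable lborel"
  by (simp add: memLp_def)

lemma memLp_finite_iff:
  "p \<noteq> top \<Longrightarrow>
    memLp p f \<longleftrightarrow> f \<in> borel_measurable lborel \<and> integrable lborel (\<lambda>x. \<bar>f x\<bar> powr enn2real p)"
  by (simp add: memLp_def)

lemma one_le_enn2real: "1 \<le> p \<Longrightarrow> p \<noteq> top \<Longrightarrow> 1 \<le> enn2real p"
  using enn2real_mono[of 1 p] by (simp add: less_top)

lemma esssup_abs_nonneg: "0 \<le> esssup lborel (\<lambda>x::real. ereal \<bar>f x\<bar>)"
proof (rule ccontr)
  assume "\<not> 0 \<le> esssup lborel (\<lambda>x::real. ereal \<bar>f x\<bar>)"
  then have neg: "esssup lborel (\<lambda>x::real. ereal \<bar>f x\<bar>) < 0"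
    by simp
  have "AE x in lborel. ereal \<bar>f x\<bar> \<le> esssup lborel (\<lambda>x::real. ereal \<bar>f x\<bar>)"
    by (rule esssup_AE)
  then have "AE x in (lborel::real measure). False"
    by eventually_elim (use neg in \<open>metis abs_ge_zero ereal_less_eq(5) not_le order_le_less_trans\<close>)
  then have "ae_filter (lborel::real measure) = bot"
    using trivial_limit_def by blast
  then show False
    by (simp add: ae_filter_eq_bot_iff)
qed

lemma Lpnorm_nonneg: "0 \<le> Lpnorm p f"
  by (simp add: Lpnorm_def esssup_abs_nonneg real_of_ereal_pos)

lemma memLp_top_bounded:
  assumes "memLp top f"
  obtains M where "0 \<le> M" and "AE x in lborel. \<bar>f x\<bar> \<le> M"
proof -
  define e where "e = esssup lborel (\<lambda>x. ereal \<bar>f x\<bar>)"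
  have e: "e < \<infinity>"
    using assms by (simp add: memLp_def e_def)
  have "AE x in lborel. ereal \<bar>f x\<bar> \<le> e"
    unfolding e_def by (rule esssup_AE)
  then have "AE x in lborel. \<bar>f x\<bar> \<le> max 0 (real_of_ereal e)"
    by eventually_elim (use e in \<open>cases e; auto\<close>)
  then show ?thesis
    by (intro that[of "max 0 (real_of_ereal e)"]) auto
qed

lemma memLp_top_Lpnorm_le:
  assumes "f \<in> borel_measurable lborel" and "0 \<le> B" and "AE x in lborel. \<bar>f x\<bar> \<le> B"
  shows "memLp top f \<and> Lpnorm top f \<le> B"
proof -
  have "esssup lborel (\<lambda>x. ereal \<bar>f x\<bar>) \<le> ereal B"
    using assms(1,3) by (intro esssup_I) (auto elim!: eventually_mono)
  with esssup_abs_nonneg[of f] assms(1) show ?thesis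
    unfolding memLp_def Lpnorm_def by (cases "esssup lborel (\<lambda>x. ereal \<bar>f x\<bar>)") auto
qed

lemma memLp_finite_Lpnorm_le:
  assumes "p \<noteq> top" and "f \<in> borel_measurable lborel" and "integrable lborel w"
    and "AE x in lborel. \<bar>f x\<bar> powr enn2real p \<le> w x" and "(\<integral>x. w x \<partial>lborel) \<le> C"
  shows "memLp p f \<and> Lpnorm p f \<le> C powr (1 / enn2real p)"
proof -
  have int: "integrable lborel (\<lambda>x. \<bar>f x\<bar> powr enn2real p)"
    by (rule Bochner_Integration.integrable_bound[OF assms(3)])
      (use assms(2,4) in \<open>auto elim!: eventually_mono\<close>)
  have "(\<integral>x. \<bar>f x\<bar> powr enn2real p \<partial>lborel) \<le> C"
    using integral_mono_AE[OF int assms(3,4)] assms(5) by linarith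
  then show ?thesis
    using int assms(1,2) by (simp add: memLp_def Lpnorm_def powr_mono2 integral_nonneg_AE)
qed

lemma memLp_diff:
  assumes f: "memLp p f" and g: "memLp p g"
  shows "memLp p (\<lambda>x. f x - g x)"
proof -
  have [measurable]: "f \<in> borel_measurable lborel" "g \<in> borel_measurable lborel"
    using f g by (blast intro: memLp_borel_measurable)+
  show ?thesis
  proof (cases "p = top")
    case True
    obtain Mf Mg where M: "0 \<le> Mf" "0 \<le> Mg"
      and bounds: "AE x in lborel. \<bar>f x\<bar> \<le> Mf" "AE x in lborel. \<bar>g x\<bar> \<le> Mg"
      using memLp_top_bounded f g True by metis
    from bounds have "AE x in lborel. \<bar>f x - g x\<bar> \<le> Mf + Mg"
      by eventually_elim simp
    then show ?thesis
      using memLp_top_Lpnorm_le[of "\<lambda>x. f x - g x" "Mf + Mg"] M True by simp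
  next
    case False
    define q where "q = enn2real p"
    have bound: "\<bar>f x - g x\<bar> powr q \<le> 2 powr q * (\<bar>f x\<bar> powr q + \<bar>g x\<bar> powr q)" for x
    proof -
      have "\<bar>f x - g x\<bar> powr q \<le> (2 * max \<bar>f x\<bar> \<bar>g x\<bar>) powr q"
        by (intro powr_mono2) (auto simp: q_def)
      also have "\<dots> = 2 powr q * max \<bar>f x\<bar> \<bar>g x\<bar> powr q"
        by (simp add: powr_mult)
      also have "\<dots> \<le> 2 powr q * (\<bar>f x\<bar> powr q + \<bar>g x\<bar> powr q)"
        by (intro mult_left_mono) (auto simp: max_def)
      finally show ?thesis .
  qed
  have int: "integrable lborel (\<lambda>x. 2 powr q * (\<bar>f x\<bar> powr q + \<bar>g x\<bar> powr q))"
    using f g False by (simp add: memLp_finite_iff q_def)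
  show ?thesis
    by (rule conjunct1[OF memLp_finite_Lpnorm_le[OF False _ int]]) (use bound in \<open>auto simp: q_def\<close>)
  qed
qed

lemma memLp_cmult_dilate:
  assumes g: "memLp p g" and \<beta>: "\<beta> \<noteq> 0"
  shows "memLp p (\<lambda>x. c * g (\<beta> * x))"
proof -
  have [measurable]: "g \<in> borel_measurable lborel"
    using g by (rule memLp_borel_measurable)
  show ?thesis
  proof (cases "p = top")
    case True
    obtain M where M: "0 \<le> M" "AE x in lborel. \<bar>g x\<bar> \<le> M"
      using memLp_top_bounded g True by metis
    have "AE x in lborel. \<bar>g (\<beta> * x)\<bar> \<le> M"
      using M(2) by (rule AE_lborel_scale[OF \<beta>])
    then have "AE x in lborel. \<bar>c * g (\<beta> * x)\<bar> \<le> \<bar>c\<bar> * M"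
      by eventually_elim (simp add: abs_mult mult_left_mono)
    then show ?thesis
      using memLp_top_Lpnorm_le[of "\<lambda>x. c * g (\<beta> * x)" "\<bar>c\<bar> * M"] M True by simp
  next
    case False
    have "integrable lborel (\<lambda>x. \<bar>g x\<bar> powr enn2real p)"
      using g False by (simp add: memLp_finite_iff)
    then have "integrable lborel (\<lambda>x. \<bar>g (\<beta> * x)\<bar> powr enn2real p)"
      by (rule lborel_integrable_scale[OF \<beta>])
    then show ?thesis
      using False by (simp add: memLp_finite_iff abs_mult powr_mult)
  qed
qed

lemma convex_on_powr_nonneg:
  fixes q :: real
  assumes q: "1 \<le> q"
  shows "convex_on {0..} (\<lambda>x. x powr q)"
proof (rule convex_onI)
  fix t x y :: real
  assume t: "0 < t" "t < 1" and xy: "x \<in> {0..}" "y \<in> {0..}"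
  have shrink: "s powr q \<le> s" if "0 \<le> s" "s \<le> 1" for s :: real
    using that q powr_le_one_le[of s q] by (cases "s = 0") auto
  show "((1 - t) *\<^sub>R x + t *\<^sub>R y) powr q \<le> (1 - t) * x powr q + t * y powr q"
  proof (cases "x = 0 \<or> y = 0")
    case False
    then have "x \<in> {0<..}" "y \<in> {0<..}"
      using xy by auto
    then show ?thesis
      using powr_convex[OF q] t unfolding convex_on_def by (smt (verit))
  next
    case True
    then show ?thesis
    proof
      assume "x = 0"
      have "(t * y) powr q = t powr q * y powr q"
        using t xy by (simp add: powr_mult)
      also have "\<dots> \<le> t * y powr q"
        using shrink[of t] t by (intro mult_right_mono) auto
      finally show ?thesis
        using \<open>x = 0\<close> by simp
    next
      assume "y = 0"
      have "((1 - t) * x) powr q = (1 - t) powr q * x powr q"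
        using t xy by (simp add: powr_mult)
      also have "\<dots> \<le> (1 - t) * x powr q"
        using shrink[of "1 - t"] t by (intro mult_right_mono) auto
      finally show ?thesis
        using \<open>y = 0\<close> by simp
    qed
  qed
qed (simp add: convex_real_interval)

lemma weighted_sum_powr_le:
  fixes w v :: "'a \<Rightarrow> real"
  assumes A: "finite A" and q: "1 \<le> q"
    and w: "\<And>i. i \<in> A \<Longrightarrow> 0 \<le> w i" and v: "\<And>i. i \<in> A \<Longrightarrow> 0 \<le> v i"
  shows "(\<Sum>i\<in>A. w i * v i) powr q \<le> (\<Sum>i\<in>A. w i) powr (q - 1) * (\<Sum>i\<in>A. w i * v i powr q)"
proof -
  define W where "W = (\<Sum>i\<in>A. w i)"
  show ?thesis
  proof (cases "W = 0")
    case True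
    then have "\<forall>i\<in>A. w i = 0"
      using A w by (simp add: W_def sum_nonneg_eq_0_iff)
    then show ?thesis
      by simp
  next
    case False
    then have W: "0 < W" "A \<noteq> {}"
      using w sum_nonneg[of A w] by (auto simp: W_def)
    have "(\<Sum>i\<in>A. (w i / W) *\<^sub>R v i) powr q \<le> (\<Sum>i\<in>A. (w i / W) * v i powr q)"
      using W w v
      by (intro convex_on_sum[OF A W(2) convex_on_powr_nonneg[OF q]])
        (auto simp: W_def sum_divide_distrib[symmetric])
    then have mean: "((\<Sum>i\<in>A. w i * v i) / W) powr q \<le> (\<Sum>i\<in>A. w i * v i powr q) / W"
      by (simp add: sum_divide_distrib)
    have "0 \<le> (\<Sum>i\<in>A. w i * v i) / W"
      using W w v by (simp add: sum_nonneg)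
    then have "(\<Sum>i\<in>A. w i * v i) powr q = W powr q * ((\<Sum>i\<in>A. w i * v i) / W) powr q"
      using W by (simp flip: powr_mult)
    also have "\<dots> \<le> W powr q * ((\<Sum>i\<in>A. w i * v i powr q) / W)"
      using mean by (intro mult_left_mono) auto
    also have "\<dots> = W powr (q - 1) * (\<Sum>i\<in>A. w i * v i powr q)"
      using W by (simp add: powr_diff)
    finally show ?thesis
      by (simp add: W_def)
  qed
qed

lemma integrable_suminf_nonneg:
  fixes w :: "nat \<Rightarrow> 'a \<Rightarrow> real"
  assumes int: "\<And>m. integrable M (w m)" and nonneg: "\<And>m x. 0 \<le> w m x"
    and le: "\<And>m. (\<integral>x. w m x \<partial>M) \<le> c m" and summable: "summable c"
  shows "(AE x in M. summable (\<lambda>m. w m x)) \<and> integrable M (\<lambda>x. \<Sum>m. w m x) \<and>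
    (\<integral>x. (\<Sum>m. w m x) \<partial>M) \<le> (\<Sum>m. c m)"
proof -
  have [measurable]: "\<And>m. w m \<in> borel_measurable M"
    using int by auto
  have summ: "summable (\<lambda>m. \<integral>x. w m x \<partial>M)"
    by (rule summable_comparison_test'[OF summable])
      (use le nonneg in \<open>auto intro: integral_nonneg_AE\<close>)
  have "(\<integral>\<^sup>+x. (\<Sum>m. ennreal (w m x)) \<partial>M) = (\<Sum>m. \<integral>\<^sup>+x. ennreal (w m x) \<partial>M)"
    by (rule nn_integral_suminf) measurable
  also have "\<dots> = (\<Sum>m. ennreal (\<integral>x. w m x \<partial>M))"
    using int nonneg by (simp add: nn_integral_eq_integral)
  also have "\<dots> \<noteq> \<infinity>"
    unfolding infinity_ennreal_def
    by (rule ennreal_suminf_neq_top[OF summ]) (use nonneg in \<open>auto intro: integral_nonneg_AE\<close>)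
  finally have "AE x in M. (\<Sum>m. ennreal (w m x)) \<noteq> \<infinity>"
    by (intro nn_integral_PInf_AE[of "\<lambda>x. \<Sum>m. ennreal (w m x)"]) auto
  then have AE: "AE x in M. summable (\<lambda>m. w m x)"
    by eventually_elim (use nonneg in \<open>auto intro: summable_suminf_not_top\<close>)
  have "(\<integral>x. (\<Sum>m. w m x) \<partial>M) = (\<Sum>m. \<integral>x. w m x \<partial>M)"
    using int nonneg AE summ by (intro integral_suminf) auto
  also have "\<dots> \<le> (\<Sum>m. c m)"
    by (intro suminf_le summ summable le)
  finally show ?thesis
    using int nonneg AE summ by (auto intro: integrable_suminf)
qed

lemma suminf_geometric_powr_le:
  fixes q r :: real and v :: "nat \<Rightarrow> real"
  assumes q: "1 \<le> q" and r: "0 \<le> r" "r < 1" and v: "\<And>m. 0 \<le> v m"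
    and summ: "summable (\<lambda>m. r^m * v m powr q)"
  shows "summable (\<lambda>m. r^m * v m) \<and>
    (\<Sum>m. r^m * v m) powr q \<le> (1 / (1 - r)) powr (q - 1) * (\<Sum>m. r^m * v m powr q)"
proof -
  define K where "K = (1 / (1 - r)) powr (q - 1)"
  define T where "T = (\<Sum>m. r^m * v m powr q)"
  have T: "0 \<le> T"
    unfolding T_def using summ r v by (intro suminf_nonneg) auto
  have partial: "(\<Sum>m<N. r^m * v m) powr q \<le> K * T" for N
  proof -
    have "(\<Sum>m<N. r^m) \<le> 1 / (1 - r)"
      using r by (simp add: sum_gp_strict divide_right_mono)
    then have W: "(\<Sum>m<N. r^m) powr (q - 1) \<le> K"
      unfolding K_def using q r by (intro powr_mono2) (auto intro: sum_nonneg)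
    have P: "(\<Sum>m<N. r^m * v m powr q) \<le> T"
      unfolding T_def using summ r by (intro sum_le_suminf) auto
    have "(\<Sum>m<N. r^m * v m) powr q \<le> (\<Sum>m<N. r^m) powr (q - 1) * (\<Sum>m<N. r^m * v m powr q)"
      using q r v by (intro weighted_sum_powr_le) auto
    also have "\<dots> \<le> K * T"
      using W P T r v by (intro mult_mono) (auto simp: K_def intro!: sum_nonneg)
    finally show ?thesis .
  qed
  define B where "B = (K * T) powr (1 / q)"
  have partial_le: "(\<Sum>m<N. r^m * v m) \<le> B" for N
  proof -
    have "((\<Sum>m<N. r^m * v m) powr q) powr (1 / q) \<le> B"
      unfolding B_def using partial q by (intro powr_mono2) auto
    then show ?thesis
      using q r v by (simp add: powr_powr sum_nonneg)
  qed
  have summable: "summable (\<lambda>m. r^m * v m)"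
    by (rule bounded_imp_summable[of _ B])
      (use r v partial_le[of "Suc _"] in \<open>auto simp: lessThan_Suc_atMost\<close>)
  then have "(\<Sum>m. r^m * v m) powr q \<le> B powr q"
    using q r v partial_le by (intro powr_mono2 suminf_nonneg suminf_le_const) auto
  also have "\<dots> = K * T"
    unfolding B_def using q T by (simp add: K_def powr_powr)
  finally show ?thesis
    using summable by (simp add: K_def T_def)
qed

lemma integral_powr_geometric_series_le:
  fixes q r I :: real and v :: "nat \<Rightarrow> real \<Rightarrow> real"
  assumes q: "1 \<le> q" and r: "0 \<le> r" "r < 1"
    and [measurable]: "\<And>m. v m \<in> borel_measurable lborel"
    and v_nonneg: "\<And>m x. 0 \<le> v m x"
    and v_int: "\<And>m. integrable lborel (\<lambda>x. v m x powr q)"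
    and v_le: "\<And>m. (\<integral>x. v m x powr q \<partial>lborel) \<le> I"
  shows "(AE x in lborel. summable (\<lambda>m. r^m * v m x)) \<and>
    integrable lborel (\<lambda>x. (\<Sum>m. r^m * v m x) powr q) \<and>
    (\<integral>x. (\<Sum>m. r^m * v m x) powr q \<partial>lborel) \<le> I / (1 - r) powr q"
proof -
  define K where "K = (1 / (1 - r)) powr (q - 1)"
  define w where "w m x = r^m * v m x powr q" for m x
  have w_int: "integrable lborel (w m)" for m
    unfolding w_def using v_int by simp
  have w_nonneg: "0 \<le> w m x" for m x
    using r by (simp add: w_def)
  have w_le: "(\<integral>x. w m x \<partial>lborel) \<le> r^m * I" for m
    unfolding w_def using v_le r by (simp add: mult_left_mono)
  have geometric: "(\<lambda>m. r^m * I) sums (I / (1 - r))"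
    using sums_mult2[OF geometric_sums[of r], of I] r by simp
  have AE_w: "AE x in lborel. summable (\<lambda>m. w m x)"
    and T_int: "integrable lborel (\<lambda>x. \<Sum>m. w m x)"
    and T_le: "(\<integral>x. (\<Sum>m. w m x) \<partial>lborel) \<le> I / (1 - r)"
    using integrable_suminf_nonneg[OF w_int w_nonneg w_le sums_summable[OF geometric]]
      sums_unique[OF geometric] by auto
  have bound: "AE x in lborel. summable (\<lambda>m. r^m * v m x) \<and> 0 \<le> (\<Sum>m. w m x) \<and>
      (\<Sum>m. r^m * v m x) powr q \<le> K * (\<Sum>m. w m x)"
    using AE_w
  proof eventually_elim
    case (elim x)
    then show ?case
      using suminf_geometric_powr_le[OF q r] v_nonneg suminf_nonneg[OF elim w_nonneg]
      by (auto simp: K_def w_def)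
  qed
  have "AE x in lborel. norm ((\<Sum>m. r^m * v m x) powr q) \<le> norm (K * (\<Sum>m. w m x))"
    using bound by eventually_elim (simp add: K_def)
  then have int: "integrable lborel (\<lambda>x. (\<Sum>m. r^m * v m x) powr q)"
    by (intro Bochner_Integration.integrable_bound[OF integrable_mult_right[OF T_int]]) auto
  have "(\<integral>x. (\<Sum>m. r^m * v m x) powr q \<partial>lborel) \<le> (\<integral>x. K * (\<Sum>m. w m x) \<partial>lborel)"
    using int T_int bound by (intro integral_mono_AE) (auto elim!: eventually_mono)
  also have "\<dots> \<le> K * (I / (1 - r))"
    using T_le by (simp add: K_def mult_left_mono del: times_divide_eq_right)
  also have "\<dots> = I / (1 - r) powr q"
    using r by (simp add: K_def powr_diff powr_divide field_simps)
  finally show ?thesis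
    using int bound by (auto elim!: eventually_mono)
qed

lemma summable_tail_le:
  fixes s u :: "nat \<Rightarrow> real"
  assumes r: "0 \<le> r" and s: "\<And>n. \<bar>s n\<bar> \<le> r^n * u n"
    and u: "summable (\<lambda>m. r^m * u (m + N))"
  shows "summable s \<and> \<bar>(\<Sum>n. s n) - (\<Sum>n<N. s n)\<bar> \<le> r^N * (\<Sum>m. r^m * u (m + N))"
proof -
  have dominated: "\<bar>s (m + N)\<bar> \<le> r^N * (r^m * u (m + N))" for m
    using s[of "m + N"] by (simp add: power_add mult_ac)
  have majorant: "summable (\<lambda>m. r^N * (r^m * u (m + N)))"
    using u by (rule summable_mult)
  have abs_tail: "summable (\<lambda>m. \<bar>s (m + N)\<bar>)"
    by (rule summable_comparison_test'[OF majorant]) (use dominated in auto)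
  then have "summable s"
    using summable_rabs_cancel summable_iff_shift by blast
  then have "(\<Sum>n. s n) - (\<Sum>n<N. s n) = (\<Sum>m. s (m + N))"
    using suminf_split_initial_segment[of s N] by linarith
  also have "\<bar>\<dots>\<bar> \<le> (\<Sum>m. \<bar>s (m + N)\<bar>)"
    using abs_tail by (rule summable_rabs)
  also have "\<dots> \<le> (\<Sum>m. r^N * (r^m * u (m + N)))"
    by (intro suminf_le dominated abs_tail majorant)
  also have "\<dots> = r^N * (\<Sum>m. r^m * u (m + N))"
    using u by (rule suminf_mult)
  finally show ?thesis
    using \<open>summable s\<close> by blast
qed

lemma Lp_series_convI_geometric:
  fixes s :: "nat \<Rightarrow> real \<Rightarrow> real" and F :: "real \<Rightarrow> real"
  assumes r: "0 \<le> r" "r < 1"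
    and terms: "\<And>n. memLp p (s n) \<and> Lpnorm p (s n) \<le> r^n * K"
    and tails: "\<And>N. Lpnorm p (\<lambda>x. F x - (\<Sum>n<N. s n x)) \<le> r^N * K'"
  shows "Lp_series_conv p s F"
proof -
  have "summable (\<lambda>n. Lpnorm p (s n))"
    by (rule summable_comparison_test'[of "\<lambda>n. r^n * K"])
      (use r terms Lpnorm_nonneg in \<open>auto intro: summable_mult2 summable_geometric\<close>)
  moreover have "(\<lambda>N. Lpnorm p (\<lambda>x. F x - (\<Sum>n<N. s n x))) \<longlonglongrightarrow> 0"
  proof (rule tendsto_sandwich[OF _ _ tendsto_const])
    show "\<forall>\<^sub>F N in sequentially. 0 \<le> Lpnorm p (\<lambda>x. F x - (\<Sum>n<N. s n x))"
      by (simp add: Lpnorm_nonneg)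
    show "\<forall>\<^sub>F N in sequentially. Lpnorm p (\<lambda>x. F x - (\<Sum>n<N. s n x)) \<le> r^N * K'"
      using tails by simp
    show "(\<lambda>N. r^N * K') \<longlonglongrightarrow> 0"
      using r by (intro tendsto_mult_left_zero LIMSEQ_power_zero) auto
  qed
  ultimately show ?thesis
    using terms unfolding Lp_series_conv_def by blast
qed

lemma Lp_series_conv_geometric_top:
  fixes s :: "nat \<Rightarrow> real \<Rightarrow> real"
  assumes r: "0 \<le> r" "r < 1" and M: "0 \<le> M"
    and [measurable]: "\<And>n. s n \<in> borel_measurable lborel"
    and bound: "AE x in lborel. \<forall>n. \<bar>s n x\<bar> \<le> r^n * M"
  shows "memLp top (\<lambda>x. \<Sum>n. s n x) \<and> Lp_series_conv top s (\<lambda>x. \<Sum>n. s n x) \<and>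
    (AE x in lborel. summable (\<lambda>n. s n x))"
proof -
  define F where "F x = (\<Sum>n. s n x)" for x
  have [measurable]: "F \<in> borel_measurable lborel"
    unfolding F_def by measurable
  have geometric: "summable (\<lambda>m. r^m * M)" "(\<Sum>m. r^m * M) = M / (1 - r)"
    using sums_mult2[OF geometric_sums[of r], of M] r by (simp_all add: sums_iff)
  have tail: "AE x in lborel. summable (\<lambda>n. s n x) \<and>
      (\<forall>N. \<bar>F x - (\<Sum>n<N. s n x)\<bar> \<le> r^N * (M / (1 - r)))"
    using bound
    by eventually_elim (use summable_tail_le[of r _ "\<lambda>_. M"] geometric r in \<open>auto simp: F_def\<close>)
  have tails: "memLp top (\<lambda>x. F x - (\<Sum>n<N. s n x)) \<and>
      Lpnorm top (\<lambda>x. F x - (\<Sum>n<N. s n x)) \<le> r^N * (M / (1 - r))" for N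
  proof -
    have "AE x in lborel. \<bar>F x - (\<Sum>n<N. s n x)\<bar> \<le> r^N * (M / (1 - r))"
      using tail by eventually_elim blast
    then show ?thesis
      using r M by (intro memLp_top_Lpnorm_le) auto
  qed
  have terms: "memLp top (s n) \<and> Lpnorm top (s n) \<le> r^n * M" for n
    using bound r M by (intro memLp_top_Lpnorm_le) (auto elim!: eventually_mono)
  have "Lp_series_conv top s F"
    using r terms tails by (intro Lp_series_convI_geometric) blast+
  then show ?thesis
    using tails[of 0] tail unfolding F_def by (auto elim!: eventually_mono)
qed

lemma Lp_tail_geometric_finite:
  fixes p :: ennreal and r I :: real and s u :: "nat \<Rightarrow> real \<Rightarrow> real"
  assumes p: "1 \<le> p" "p \<noteq> top" and r: "0 \<le> r" "r < 1" and I: "0 \<le> I"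
    and [measurable]: "\<And>n. s n \<in> borel_measurable lborel" "\<And>n. u n \<in> borel_measurable lborel"
    and u_nonneg: "\<And>n x. 0 \<le> u n x" and s_le: "\<And>n x. \<bar>s n x\<bar> \<le> r^n * u n x"
    and u_int: "\<And>n. integrable lborel (\<lambda>x. u n x powr enn2real p)"
    and u_le: "\<And>n. (\<integral>x. u n x powr enn2real p \<partial>lborel) \<le> I"
  shows "(AE x in lborel. summable (\<lambda>n. s n x)) \<and>
    memLp p (\<lambda>x. (\<Sum>n. s n x) - (\<Sum>n<N. s n x)) \<and>
    Lpnorm p (\<lambda>x. (\<Sum>n. s n x) - (\<Sum>n<N. s n x)) \<le> r^N * (I powr (1 / enn2real p) / (1 - r))"
proof -
  define q where "q = enn2real p"
  have q: "1 \<le> q"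
    using p by (simp add: q_def one_le_enn2real)
  define T where "T x = (\<Sum>m. r^m * u (m + N) x)" for x
  define C where "C = I / (1 - r) powr q"
  have L: "(AE x in lborel. summable (\<lambda>m. r^m * u (m + N) x)) \<and>
      integrable lborel (\<lambda>x. T x powr q) \<and> (\<integral>x. T x powr q \<partial>lborel) \<le> C"
    unfolding T_def C_def using q r u_nonneg u_int u_le
    by (intro integral_powr_geometric_series_le) (auto simp: q_def)
  have AE: "AE x in lborel. summable (\<lambda>n. s n x) \<and>
      \<bar>(\<Sum>n. s n x) - (\<Sum>n<N. s n x)\<bar> powr q \<le> (r^N) powr q * T x powr q"
    using L[THEN conjunct1]
  proof eventually_elim
    case (elim x)
    with summable_tail_le[of r "\<lambda>n. s n x" "\<lambda>n. u n x" N] r s_le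
    have "summable (\<lambda>n. s n x)" and "\<bar>(\<Sum>n. s n x) - (\<Sum>n<N. s n x)\<bar> \<le> r^N * T x"
      unfolding T_def by auto
    then show ?case
      using q r by (auto simp: powr_mult[symmetric] intro: powr_mono2)
  qed
  have "memLp p (\<lambda>x. (\<Sum>n. s n x) - (\<Sum>n<N. s n x)) \<and>
      Lpnorm p (\<lambda>x. (\<Sum>n. s n x) - (\<Sum>n<N. s n x)) \<le> ((r^N) powr q * C) powr (1 / q)"
    using L AE r unfolding q_def
    by (intro memLp_finite_Lpnorm_le[OF p(2), where w = "\<lambda>x. (r^N) powr q * T x powr q"])
      (auto simp: q_def elim!: eventually_mono intro: mult_left_mono)
  moreover have "((r^N) powr q * C) powr (1 / q) = r^N * (I powr (1 / q) / (1 - r))"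
    using q r I by (simp add: C_def powr_mult powr_divide powr_powr)
  ultimately show ?thesis
    using AE by (auto simp: q_def elim!: eventually_mono)
qed

lemma Lp_series_conv_geometric_finite:
  fixes p :: ennreal and r I :: real and s u :: "nat \<Rightarrow> real \<Rightarrow> real"
  assumes p: "1 \<le> p" "p \<noteq> top" and r: "0 \<le> r" "r < 1"
    and [measurable]: "\<And>n. s n \<in> borel_measurable lborel" "\<And>n. u n \<in> borel_measurable lborel"
    and u_nonneg: "\<And>n x. 0 \<le> u n x" and s_le: "\<And>n x. \<bar>s n x\<bar> \<le> r^n * u n x"
    and u_int: "\<And>n. integrable lborel (\<lambda>x. u n x powr enn2real p)"
    and u_le: "\<And>n. (\<integral>x. u n x powr enn2real p \<partial>lborel) \<le> I"
  shows "memLp p (\<lambda>x. \<Sum>n. s n x) \<and> Lp_series_conv p s (\<lambda>x. \<Sum>n. s n x) \<and>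
    (AE x in lborel. summable (\<lambda>n. s n x))"
proof -
  define q where "q = enn2real p"
  have q: "1 \<le> q"
    using p by (simp add: q_def one_le_enn2real)
  have I: "0 \<le> I"
    by (rule order_trans[OF integral_nonneg_AE u_le[of 0]]) simp
  note tails = Lp_tail_geometric_finite[OF p r I, of s u, OF _ _ u_nonneg s_le u_int u_le]
  have terms: "memLp p (s n) \<and> Lpnorm p (s n) \<le> r^n * I powr (1 / q)" for n
  proof -
    have "\<bar>s n x\<bar> powr q \<le> (r^n) powr q * u n x powr q" for x
      using s_le[of n x] r u_nonneg[of n x] q by (simp add: powr_mono2 flip: powr_mult)
    moreover have "(\<integral>x. (r^n) powr q * u n x powr q \<partial>lborel) \<le> (r^n) powr q * I"
      using u_le[of n] by (simp add: q_def mult_left_mono)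
    ultimately have "memLp p (s n) \<and> Lpnorm p (s n) \<le> ((r^n) powr q * I) powr (1 / q)"
      using u_int[of n] unfolding q_def
      by (intro memLp_finite_Lpnorm_le[OF p(2), where w = "\<lambda>x. (r^n) powr q * u n x powr q"])
        (auto simp: q_def)
    moreover have "((r^n) powr q * I) powr (1 / q) = r^n * I powr (1 / q)"
      using q r I by (simp add: powr_mult powr_powr)
    ultimately show ?thesis
      by simp
  qed
  have "Lp_series_conv p s (\<lambda>x. \<Sum>n. s n x)"
    using r terms tails
    by (intro Lp_series_convI_geometric[where K' = "I powr (1 / q) / (1 - r)"]) (auto simp: q_def)
  then show ?thesis
    using tails[of 0] by simp
qed

lemma suminf_dilation_recurrence:
  fixes c \<beta> x :: real and G :: "real \<Rightarrow> real"
  assumes summable: "summable (\<lambda>n. c^n * G (\<beta>^n * x))"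
  shows "(\<Sum>n. c^n * G (\<beta>^n * x)) - c * (\<Sum>n. c^n * G (\<beta>^n * (\<beta> * x))) = G x"
proof -
  let ?s = "\<lambda>n. c^n * G (\<beta>^n * x)" and ?t = "\<lambda>n. c^n * G (\<beta>^n * (\<beta> * x))"
  have shift: "?s (Suc n) = c * ?t n" for n
    by (simp add: mult.assoc mult.left_commute)
  have "(\<Sum>n. ?s (Suc n)) = suminf ?s - ?s 0"
    using summable by (rule suminf_split_head)
  moreover have "(\<Sum>n. ?s (Suc n)) = c * suminf ?t"
  proof (cases "c = 0")
    case False
    have "summable (\<lambda>n. c * ?t n)"
      using summable unfolding shift[symmetric] by (subst summable_Suc_iff)
    then have "summable ?t"
      using False by (simp add: summable_cmult_iff)
    then show ?thesis
      unfolding shift by (rule suminf_mult)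
  qed simp
  ultimately show ?thesis
    by simp
qed

lemma dilation_series_Lp_top:
  fixes c \<beta> :: real and G :: "real \<Rightarrow> real"
  assumes c: "\<bar>c\<bar> < 1" and \<beta>: "\<beta> \<noteq> 0" and G: "memLp top G"
  shows "memLp top (\<lambda>x. \<Sum>n. c^n * G (\<beta>^n * x)) \<and>
    Lp_series_conv top (\<lambda>n x. c^n * G (\<beta>^n * x)) (\<lambda>x. \<Sum>n. c^n * G (\<beta>^n * x)) \<and>
    (AE x in lborel. summable (\<lambda>n. c^n * G (\<beta>^n * x)))"
proof -
  have [measurable]: "G \<in> borel_measurable lborel"
    using G by (rule memLp_borel_measurable)
  obtain M where M: "0 \<le> M" "AE x in lborel. \<bar>G x\<bar> \<le> M"
    using memLp_top_bounded G by metis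
  have "AE x in lborel. \<forall>n. \<bar>G (\<beta>^n * x)\<bar> \<le> M"
    using M(2) \<beta> by (intro AE_all_countable[THEN iffD2] allI AE_lborel_scale) auto
  then have "AE x in lborel. \<forall>n. \<bar>c^n * G (\<beta>^n * x)\<bar> \<le> \<bar>c\<bar>^n * M"
    by eventually_elim (auto simp: abs_mult power_abs intro: mult_left_mono)
  then show ?thesis
    using c M by (intro Lp_series_conv_geometric_top) auto
qed

lemma dilation_series_Lp_finite:
  fixes p :: ennreal and c \<beta> :: real and G :: "real \<Rightarrow> real"
  assumes p: "1 \<le> p" "p \<noteq> top" and \<beta>: "\<beta> \<noteq> 0"
    and c: "\<bar>c\<bar> < \<bar>\<beta>\<bar> powr (1 / enn2real p)" and G: "memLp p G"
  shows "memLp p (\<lambda>x. \<Sum>n. c^n * G (\<beta>^n * x)) \<and>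
    Lp_series_conv p (\<lambda>n x. c^n * G (\<beta>^n * x)) (\<lambda>x. \<Sum>n. c^n * G (\<beta>^n * x)) \<and>
    (AE x in lborel. summable (\<lambda>n. c^n * G (\<beta>^n * x)))"
proof -
  have [measurable]: "G \<in> borel_measurable lborel"
    using G by (rule memLp_borel_measurable)
  have \<beta>n: "\<beta>^n \<noteq> 0" for n
    using \<beta> by simp
  define q where "q = enn2real p"
  have q: "1 \<le> q"
    using p by (simp add: q_def one_le_enn2real)
  define R where "R = \<bar>\<beta>\<bar> powr (1 / q)"
  have R: "0 < R" "(R^n) powr q = \<bar>\<beta>\<bar>^n" for n
    using \<beta> q by (simp_all add: R_def powr_power powr_powr powr_realpow)
  \<comment> \<open>The weight R^n = |\<beta>|^(n/q) gives every u n the same L^q norm as G.\<close>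
  define u where "u n x = R^n * \<bar>G (\<beta>^n * x)\<bar>" for n x
  have u_meas: "u n \<in> borel_measurable lborel" for n
    unfolding u_def by measurable
  have u_powr: "u n x powr q = \<bar>\<beta>\<bar>^n * \<bar>G (\<beta>^n * x)\<bar> powr q" for n x
    using R by (simp add: u_def powr_mult)
  have G_int: "integrable lborel (\<lambda>x. \<bar>G x\<bar> powr q)"
    using G p by (simp add: memLp_finite_iff q_def)
  have "integrable lborel (\<lambda>x. u n x powr q)" for n
    unfolding u_powr using lborel_integrable_scale[OF \<beta>n G_int] by simp
  moreover have "(\<integral>x. u n x powr q \<partial>lborel) = (\<integral>x. \<bar>G x\<bar> powr q \<partial>lborel)" for n
    unfolding u_powr using lborel_integral_scale[OF \<beta>n, of "\<lambda>x. \<bar>G x\<bar> powr q"] \<beta>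
    by (simp add: power_abs)
  moreover have "\<bar>c^n * G (\<beta>^n * x)\<bar> = (\<bar>c\<bar> / R)^n * u n x" for n x
    using R by (simp add: u_def abs_mult power_abs power_divide)
  moreover have "\<bar>c\<bar> / R < 1"
    using c R by (simp add: R_def q_def)
  ultimately show ?thesis
    using p R u_meas unfolding q_def
    by (intro Lp_series_conv_geometric_finite[where r = "\<bar>c\<bar> / R" and u = u]) (auto simp: u_def)
qed

lemma dilation_series_solves:
  fixes p :: ennreal and c \<beta> :: real and G :: "real \<Rightarrow> real"
  assumes p: "1 \<le> p" and \<beta>: "\<beta> \<noteq> 0" and c: "\<bar>c\<bar> < root_p p \<beta>" and G: "memLp p G"
  shows "memLp p (\<lambda>x. \<Sum>n. c^n * G (\<beta>^n * x)) \<and>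
    Lp_series_conv p (\<lambda>n x. c^n * G (\<beta>^n * x)) (\<lambda>x. \<Sum>n. c^n * G (\<beta>^n * x)) \<and>
    (AE x in lborel. (\<Sum>n. c^n * G (\<beta>^n * x)) - c * (\<Sum>n. c^n * G (\<beta>^n * (\<beta> * x))) = G x)"
proof -
  have "memLp p (\<lambda>x. \<Sum>n. c^n * G (\<beta>^n * x)) \<and>
    Lp_series_conv p (\<lambda>n x. c^n * G (\<beta>^n * x)) (\<lambda>x. \<Sum>n. c^n * G (\<beta>^n * x)) \<and>
    (AE x in lborel. summable (\<lambda>n. c^n * G (\<beta>^n * x)))"
  proof (cases "p = top")
    case True
    then show ?thesis
      using dilation_series_Lp_top[OF _ \<beta>] c G by (simp add: root_p_def)
  next
    case False
    then show ?thesis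
      using dilation_series_Lp_finite[OF p False \<beta> _ G] c by (simp add: root_p_def)
  qed
  then show ?thesis
    using suminf_dilation_recurrence by (auto elim!: eventually_mono)
qed

lemma root_p_pos: "b \<noteq> 0 \<Longrightarrow> 0 < root_p p b"
  by (simp add: root_p_def)

lemma root_p_inverse: "root_p p (1 / b) = 1 / root_p p b"
  by (simp add: root_p_def powr_divide)

lemma dilation_series_solves_inverse:
  fixes p :: ennreal and a b :: real and g :: "real \<Rightarrow> real"
  assumes p: "1 \<le> p" and b: "b \<noteq> 0" and a: "root_p p b < \<bar>a\<bar>" and g: "memLp p g"
  shows "\<exists>f. memLp p f \<and>
    Lp_series_conv p (\<lambda>n x. - ((1 / a) ^ (n + 1) * g (x / b ^ (n + 1)))) f \<and>
    (AE x in lborel. f x - a * f (b * x) = g x)"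
proof -
  have a0: "a \<noteq> 0"
    using a root_p_pos[OF b, of p] by auto
  have b': "1 / b \<noteq> 0"
    using b by simp
  \<comment> \<open>Substituting x / b turns the equation into f x - (1/a) f (x/b) = -(1/a) g (x/b).\<close>
  define G where "G x = - (1 / a) * g (1 / b * x)" for x
  have "memLp p G"
    unfolding G_def using g b' by (rule memLp_cmult_dilate)
  moreover have "\<bar>1 / a\<bar> < root_p p (1 / b)"
    using a root_p_pos[OF b, of p] by (simp add: root_p_inverse frac_less2)
  ultimately obtain f where f: "memLp p f"
      "Lp_series_conv p (\<lambda>n x. (1 / a)^n * G ((1 / b)^n * x)) f"
      "AE x in lborel. f x - 1 / a * f (1 / b * x) = G x"
    using dilation_series_solves[OF p b'] by blast
  have "(\<lambda>n x. (1 / a)^n * G ((1 / b)^n * x)) = (\<lambda>n x. - ((1 / a) ^ (n + 1) * g (x / b ^ (n + 1))))"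
    by (intro ext) (simp add: G_def power_one_over divide_inverse power_inverse mult_ac)
  moreover have "AE x in lborel. f (b * x) - 1 / a * f (1 / b * (b * x)) = G (b * x)"
    using f(3) by (rule AE_lborel_scale[OF b])
  then have "AE x in lborel. f x - a * f (b * x) = g x"
  proof eventually_elim
    case (elim x)
    then have "a * (f (b * x) - f x / a) = a * (- (g x / a))"
      using b by (simp add: G_def)
    then have "a * f (b * x) - f x = - g x"
      using a0 by (simp add: right_diff_distrib)
    then show ?case
      by simp
  qed
  ultimately show ?thesis
    using f by auto
qed

lemma AE_zero_of_dilation_contraction:
  fixes d :: "real \<Rightarrow> real"
  assumes \<gamma>: "\<gamma> \<noteq> 0" and \<theta>: "0 \<le> \<theta>" "\<theta> < 1"
    and contraction: "AE x in lborel. \<bar>d x\<bar> \<le> \<theta> * \<bar>d (\<gamma> * x)\<bar>"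
    and bounded: "AE x in lborel. \<bar>d x\<bar> \<le> B"
  shows "AE x in lborel. d x = 0"
proof -
  have iterate: "AE x in lborel. \<bar>d x\<bar> \<le> \<theta>^k * B" for k
  proof (induction k)
    case 0
    then show ?case
      using bounded by simp
  next
    case (Suc k)
    have "AE x in lborel. \<bar>d (\<gamma> * x)\<bar> \<le> \<theta>^k * B"
      using Suc by (rule AE_lborel_scale[OF \<gamma>])
    with contraction show ?case
    proof eventually_elim
      case (elim x)
      have "\<theta> * \<bar>d (\<gamma> * x)\<bar> \<le> \<theta> * (\<theta>^k * B)"
        using elim \<theta> by (intro mult_left_mono) auto
      then show ?case
        using elim by simp
    qed
  qed
  then have "AE x in lborel. \<forall>k. \<bar>d x\<bar> \<le> \<theta>^k * B"
    by (simp add: AE_all_countable)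
  then show ?thesis
  proof eventually_elim
    case (elim x)
    have "(\<lambda>k. \<theta>^k * B) \<longlonglongrightarrow> 0"
      using \<theta> by (intro tendsto_mult_left_zero LIMSEQ_power_zero) auto
    then have "\<bar>d x\<bar> \<le> 0"
      by (rule LIMSEQ_le_const) (use elim in auto)
    then show ?case
      by simp
  qed
qed

lemma dilation_fixed_point_AE_zero_top:
  fixes a b :: real and d :: "real \<Rightarrow> real"
  assumes b: "b \<noteq> 0" and a: "\<bar>a\<bar> \<noteq> 1" and d: "memLp top d"
    and fixed: "AE x in lborel. d x = a * d (b * x)"
  shows "AE x in lborel. d x = 0"
proof -
  obtain B where B: "AE x in lborel. \<bar>d x\<bar> \<le> B"
    using memLp_top_bounded d by metis
  show ?thesis
  proof (cases "\<bar>a\<bar> < 1")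
    case True
    have "AE x in lborel. \<bar>d x\<bar> \<le> \<bar>a\<bar> * \<bar>d (b * x)\<bar>"
      using fixed by eventually_elim (simp add: abs_mult)
    then show ?thesis
      using True b B by (intro AE_zero_of_dilation_contraction[where \<gamma> = b and \<theta> = "\<bar>a\<bar>"]) auto
  next
    case False
    then have a1: "1 < \<bar>a\<bar>"
      using a by simp
    have b': "1 / b \<noteq> 0"
      using b by simp
    have "AE x in lborel. d (1 / b * x) = a * d (b * (1 / b * x))"
      using fixed by (rule AE_lborel_scale[OF b'])
    then have "AE x in lborel. \<bar>d x\<bar> \<le> 1 / \<bar>a\<bar> * \<bar>d (1 / b * x)\<bar>"
      by eventually_elim (use a1 b in \<open>simp add: abs_mult field_simps\<close>)
    then show ?thesis
      using a1 b' B
      by (intro AE_zero_of_dilation_contraction[where \<gamma> = "1 / b" and \<theta> = "1 / \<bar>a\<bar>"]) auto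
  qed
qed

lemma dilation_fixed_point_AE_zero_finite:
  fixes p :: ennreal and a b :: real and d :: "real \<Rightarrow> real"
  assumes p: "1 \<le> p" "p \<noteq> top" and b: "b \<noteq> 0" and a: "\<bar>a\<bar> \<noteq> \<bar>b\<bar> powr (1 / enn2real p)"
    and d: "memLp p d" and fixed: "AE x in lborel. d x = a * d (b * x)"
  shows "AE x in lborel. d x = 0"
proof -
  define q where "q = enn2real p"
  have q: "1 \<le> q"
    using p by (simp add: q_def one_le_enn2real)
  have d_int: "integrable lborel (\<lambda>x. \<bar>d x\<bar> powr q)"
    using d p by (simp add: memLp_finite_iff q_def)
  have [measurable]: "d \<in> borel_measurable lborel"
    using d by (rule memLp_borel_measurable)
  define J where "J = (\<integral>x. \<bar>d x\<bar> powr q \<partial>lborel)"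
  have "AE x in lborel. \<bar>d x\<bar> powr q = \<bar>a\<bar> powr q * \<bar>d (b * x)\<bar> powr q"
    using fixed
  proof eventually_elim
    case (elim x)
    then show ?case
      by (simp add: abs_mult powr_mult)
  qed
  then have "J = (\<integral>x. \<bar>a\<bar> powr q * \<bar>d (b * x)\<bar> powr q \<partial>lborel)"
    unfolding J_def by (intro integral_cong_AE) simp_all
  also have "\<dots> = \<bar>a\<bar> powr q * J / \<bar>b\<bar>"
    using lborel_integral_scale[OF b, of "\<lambda>x. \<bar>d x\<bar> powr q"] by (simp add: J_def)
  finally have "J * \<bar>b\<bar> = \<bar>a\<bar> powr q * J"
    using b by (simp add: eq_divide_eq)
  then have "(\<bar>b\<bar> - \<bar>a\<bar> powr q) * J = 0"
    by (simp add: algebra_simps)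
  moreover have "\<bar>a\<bar> powr q \<noteq> \<bar>b\<bar>"
  proof
    assume "\<bar>a\<bar> powr q = \<bar>b\<bar>"
    then have "\<bar>b\<bar> powr (1 / q) = (\<bar>a\<bar> powr q) powr (1 / q)"
      by simp
    also have "\<dots> = \<bar>a\<bar>"
      using q by (simp add: powr_powr)
    finally show False
      using a by (simp add: q_def)
  qed
  ultimately have "J = 0"
    by simp
  then have "AE x in lborel. \<bar>d x\<bar> powr q = 0"
    using integral_nonneg_eq_0_iff_AE[OF d_int] by (simp add: J_def)
  then show ?thesis
    by eventually_elim simp
qed

lemma dilation_fixed_point_AE_zero:
  fixes p :: ennreal and a b :: real and d :: "real \<Rightarrow> real"
  assumes "1 \<le> p" and "b \<noteq> 0" and "\<bar>a\<bar> \<noteq> root_p p b"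
    and "memLp p d" and "AE x in lborel. d x = a * d (b * x)"
  shows "AE x in lborel. d x = 0"
proof (cases "p = top")
  case True
  then show ?thesis
    using assms by (intro dilation_fixed_point_AE_zero_top[of b a d]) (simp_all add: root_p_def)
next
  case False
  then show ?thesis
    using assms by (intro dilation_fixed_point_AE_zero_finite[of p b a d]) (simp_all add: root_p_def)
qed

lemma dilation_equation_unique:
  fixes p :: ennreal and a b :: real and f g h :: "real \<Rightarrow> real"
  assumes "1 \<le> p" and "b \<noteq> 0" and "\<bar>a\<bar> \<noteq> root_p p b"
    and f: "memLp p f" "AE x in lborel. f x - a * f (b * x) = g x"
    and h: "memLp p h" "AE x in lborel. h x - a * h (b * x) = g x"
  shows "AE x in lborel. h x = f x"
proof -
  have "AE x in lborel. h x - f x = a * (h (b * x) - f (b * x))"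
    using h(2) f(2) by eventually_elim (simp add: algebra_simps)
  then have "AE x in lborel. h x - f x = 0"
    by (rule dilation_fixed_point_AE_zero[OF assms(1-3) memLp_diff[OF h(1) f(1)]])
  then show ?thesis
    by eventually_elim simp
qed

theorem corollary3p3:
  fixes p :: ennreal and a b :: real and g :: "real \<Rightarrow> real"
  assumes "1 \<le> p"
    and "b \<noteq> 0"
    and "\<bar>a\<bar> \<noteq> root_p p b"
    and "memLp p g"
  shows "\<exists>f. memLp p f \<and> (AE x in lborel. f x - a * f (b * x) = g x) \<and>
    (\<forall>h. memLp p h \<and> (AE x in lborel. h x - a * h (b * x) = g x)
          \<longrightarrow> (AE x in lborel. h x = f x)) \<and>
    (\<bar>a\<bar> < root_p p b \<longrightarrow>
       Lp_series_conv p (\<lambda>n x. a ^ n * g (b ^ n * x)) f) \<and>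
    (\<bar>a\<bar> > root_p p b \<longrightarrow>
       Lp_series_conv p (\<lambda>n x. - ((1 / a) ^ (n + 1) * g (x / b ^ (n + 1)))) f)"
proof -
  obtain f where f: "memLp p f" "AE x in lborel. f x - a * f (b * x) = g x"
    and small: "\<bar>a\<bar> < root_p p b \<longrightarrow> Lp_series_conv p (\<lambda>n x. a ^ n * g (b ^ n * x)) f"
    and large: "\<bar>a\<bar> > root_p p b \<longrightarrow>
      Lp_series_conv p (\<lambda>n x. - ((1 / a) ^ (n + 1) * g (x / b ^ (n + 1)))) f"
  proof (cases "\<bar>a\<bar> < root_p p b")
    case True
    then show ?thesis
      using dilation_series_solves[OF assms(1,2) True assms(4)] that by auto
  next
    case False
    then have "root_p p b < \<bar>a\<bar>"
      using assms(3) by simp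
    then obtain f where "memLp p f" "AE x in lborel. f x - a * f (b * x) = g x"
      "Lp_series_conv p (\<lambda>n x. - ((1 / a) ^ (n + 1) * g (x / b ^ (n + 1)))) f"
      using dilation_series_solves_inverse[OF assms(1,2) _ assms(4)] by blast
    with False show ?thesis
      by (intro that) blast+
  qed
  show ?thesis
    using f small large dilation_equation_unique[OF assms(1-3) f]
    by (intro exI[of _ f] conjI allI impI) auto
qed

end
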